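(* Fix $\theta\in\mathbb R$ and let $\tau^\star(\theta)$ be the equalizing prejudice. Then for $\tau\in(-x_u,x_q)$, $s_1(\theta,\tau)>s_2(\theta,\tau)$ if and only if $\tau>\tau^\star(\theta)$ (equivalently, $s_1(\theta,\tau)<s_2(\theta,\tau)$ iff $\tau<\tau^\star(\theta)$).
   Context: Setup. Let $Q\in\{0,1\}$ be a random variable with $\mathbb P(Q=1)=\pi\in(0,1)$, and let $(\Theta,\Gamma)$ be a real-valued random vector whose conditional joint density given $Q=1$ is $h_q(\theta,\gamma)$ and given $Q=0$ is $h_u(\theta,\gamma)$, both strictly positive on $\mathbb R^2$. Monotone likelihood ratio assumption: $l(\theta,\gamma)=h_q(\theta,\gamma)/h_u(\theta,\gamma)$ is continuous and strictly increasing in each of $\theta$ and $\gamma$, and for each $\theta$ the map $\gamma\mapsto l(\theta,\gamma)$ has infimum $0$ and supremum $+\infty$. Fix payoffs $x_q>0$, $x_u>0$. For $\tau\in(-x_u,x_q)$ let $A(\tau)=\mathbb 1\{l(\Theta,\Gamma)>\frac{(1-\pi)(x_u+\tau)}{\pi(x_q-\tau)}\}$. Define $s_1(\theta,\tau)=\mathbb E[Q\mid\Theta=\theta,A(\tau)=1]$ and $s_2(\theta,\tau)=\mathbb E[A(\tau)\mid\Theta=\theta]$. The equalizing prejudice $\tau^\star(\theta)$ is the unique $\tau\in(-x_u,x_q)$ with $s_1(\theta,\tau)=s_2(\theta,\tau)$. *)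

theory Defs
  imports "HOL-Analysis.Analysis"
begin

text \<open>Setting: Q in {0,1} with P(Q=1) = pr; (Theta,Gamma) has conditional joint
  density hq given Q=1 and hu given Q=0 (with respect to Lebesgue measure on R^2).\<close>

definition lik_ratio :: "(real \<Rightarrow> real \<Rightarrow> real) \<Rightarrow> (real \<Rightarrow> real \<Rightarrow> real) \<Rightarrow> real \<Rightarrow> real \<Rightarrow> real" where
  "lik_ratio hq hu t g = hq t g / hu t g"

definition threshold :: "real \<Rightarrow> real \<Rightarrow> real \<Rightarrow> real \<Rightarrow> real" where
  "threshold pr xq xu tau = ((1 - pr) * (xu + tau)) / (pr * (xq - tau))"

definition accept_set ::
  "real \<Rightarrow> real \<Rightarrow> real \<Rightarrow> (real \<Rightarrow> real \<Rightarrow> real) \<Rightarrow> (real \<Rightarrow> real \<Rightarrow> real) \<Rightarrow> real \<Rightarrow> real \<Rightarrow> real set" where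
  "accept_set pr xq xu hq hu t tau = {g. lik_ratio hq hu t g > threshold pr xq xu tau}"

definition theta_density ::
  "real \<Rightarrow> (real \<Rightarrow> real \<Rightarrow> real) \<Rightarrow> (real \<Rightarrow> real \<Rightarrow> real) \<Rightarrow> real \<Rightarrow> real" where
  "theta_density pr hq hu t = pr * (\<integral>g. hq t g \<partial>lborel) + (1 - pr) * (\<integral>g. hu t g \<partial>lborel)"

definition prob_QA_given ::
  "real \<Rightarrow> real \<Rightarrow> real \<Rightarrow> (real \<Rightarrow> real \<Rightarrow> real) \<Rightarrow> (real \<Rightarrow> real \<Rightarrow> real) \<Rightarrow> real \<Rightarrow> real \<Rightarrow> real" where
  "prob_QA_given pr xq xu hq hu t tau =
     pr * (LINT g:accept_set pr xq xu hq hu t tau|lborel. hq t g) / theta_density pr hq hu t"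

definition prob_A_given ::
  "real \<Rightarrow> real \<Rightarrow> real \<Rightarrow> (real \<Rightarrow> real \<Rightarrow> real) \<Rightarrow> (real \<Rightarrow> real \<Rightarrow> real) \<Rightarrow> real \<Rightarrow> real \<Rightarrow> real" where
  "prob_A_given pr xq xu hq hu t tau =
     (pr * (LINT g:accept_set pr xq xu hq hu t tau|lborel. hq t g)
      + (1 - pr) * (LINT g:accept_set pr xq xu hq hu t tau|lborel. hu t g)) / theta_density pr hq hu t"

text \<open>s1(t,tau) = E[Q | Theta = t, A(tau) = 1].\<close>
definition s1 ::
  "real \<Rightarrow> real \<Rightarrow> real \<Rightarrow> (real \<Rightarrow> real \<Rightarrow> real) \<Rightarrow> (real \<Rightarrow> real \<Rightarrow> real) \<Rightarrow> real \<Rightarrow> real \<Rightarrow> real" where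
  "s1 pr xq xu hq hu t tau = prob_QA_given pr xq xu hq hu t tau / prob_A_given pr xq xu hq hu t tau"

text \<open>s2(t,tau) = E[A(tau) | Theta = t].\<close>
definition s2 ::
  "real \<Rightarrow> real \<Rightarrow> real \<Rightarrow> (real \<Rightarrow> real \<Rightarrow> real) \<Rightarrow> (real \<Rightarrow> real \<Rightarrow> real) \<Rightarrow> real \<Rightarrow> real \<Rightarrow> real" where
  "s2 pr xq xu hq hu t tau = prob_A_given pr xq xu hq hu t tau"

definition tau_star ::
  "real \<Rightarrow> real \<Rightarrow> real \<Rightarrow> (real \<Rightarrow> real \<Rightarrow> real) \<Rightarrow> (real \<Rightarrow> real \<Rightarrow> real) \<Rightarrow> real \<Rightarrow> real" where
  "tau_star pr xq xu hq hu t =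
     (THE tau. tau \<in> {-xu<..<xq} \<and> s1 pr xq xu hq hu t tau = s2 pr xq xu hq hu t tau)"

end

theory Submission
  imports Defs
begin

(* Fix \<theta> and write L g = l(\<theta>, g), a continuous increasing bijection of the real line onto
   (0, \<infinity>). The acceptance region of prejudice \<tau> is then a half-line {a<..} with L a equal to
   the threshold, and a increases strictly with \<tau>. As a grows, s2 = P(A | \<theta>) decreases strictly,
   while s1 = P(Q | \<theta>, A) does not decrease, since by the monotone likelihood ratio the ratio of
   the upper tails of h_q and h_u does not decrease. So s1 - s2 increases strictly in a. It is
   negative for small a (s2 \<rightarrow> 1, s1 \<rightarrow> P(Q | \<theta>) < 1) and positive for large a (s2 \<rightarrow> 0, s1
   stays above its value at a = 0), hence it has exactly one zero, which determines \<tau>*. *)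

lemma continuous_attains_intermediate:
  fixes f :: "real \<Rightarrow> real"
  assumes "continuous_on UNIV f" "f x \<le> c" "c \<le> f y"
  shows "\<exists>z. f z = c"
proof -
  have "connected (range f)"
    using assms(1) by (rule connected_continuous_image) simp
  then have "{f x..f y} \<subseteq> range f"
    by (rule connected_contains_Icc) auto
  with assms(2,3) show ?thesis by auto
qed

lemma continuous_attains_above_Inf:
  fixes f :: "real \<Rightarrow> real"
  assumes "continuous_on UNIV f" "(INF x. f x) < c" "\<not> bdd_above (range f)"
  shows "\<exists>x. f x = c"
proof -
  obtain x where "f x < c"
  proof (rule ccontr)
    assume "\<not> thesis"
    then have "c \<le> (INF x. f x)" using that by (intro cINF_greatest) (auto simp: not_less[symmetric])
    with assms(2) show False by simp
  qed
  moreover obtain y where "c < f y"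
    using assms(3) by (meson bdd_aboveI2 not_le)
  ultimately show ?thesis
    using continuous_attains_intermediate[OF assms(1)] less_imp_le by blast
qed

lemma strict_mono_on_sign_iff:
  fixes F :: "real \<Rightarrow> real"
  assumes "strict_mono_on I F" "t0 \<in> I" "F t0 = 0" "t \<in> I"
  shows "0 < F t \<longleftrightarrow> t0 < t" and "F t < 0 \<longleftrightarrow> t < t0"
  using strict_mono_onD[OF assms(1) assms(2,4)] strict_mono_onD[OF assms(1) assms(4,2)] assms(3)
  by (cases t t0 rule: linorder_cases; auto)+

definition tail_integral :: "(real \<Rightarrow> real) \<Rightarrow> real \<Rightarrow> real" where
  "tail_integral h a = (LINT g:{a<..}|lborel. h g)"

lemma set_integrable_lborel:
  fixes h :: "real \<Rightarrow> real"
  assumes "integrable lborel h" "S \<in> sets borel"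
  shows "set_integrable lborel S h"
  unfolding set_integrable_def using integrable_mult_indicator[of S lborel h] assms by simp

lemma set_integral_Ioc_pos:
  fixes h :: "real \<Rightarrow> real"
  assumes "integrable lborel h" "\<And>g. h g > 0" "a < b"
  shows "(LINT g:{a<..b}|lborel. h g) > 0"
proof -
  let ?f = "\<lambda>g. indicator {a<..b} g * h g"
  have int: "integrable lborel ?f"
    using set_integrable_lborel[OF assms(1), of "{a<..b}"] by (simp add: set_integrable_def)
  have nonneg: "AE g in lborel. 0 \<le> ?f g"
    using assms(2) by (auto intro!: AE_I2 simp: less_imp_le)
  have "\<not> (AE g in lborel. ?f g = 0)"
  proof
    assume "AE g in lborel. ?f g = 0"
    then have "AE g in lborel. g \<notin> {a<..b}"
      by eventually_elim (use assms(2) in \<open>auto split: split_indicator simp: less_imp_neq[symmetric]\<close>)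
    then have "emeasure lborel {a<..b} = 0"
      by (subst AE_iff_measurable[symmetric, where P="\<lambda>g. g \<notin> {a<..b}"]) auto
    with assms(3) show False by simp
  qed
  with integral_nonneg_eq_0_iff_AE[OF int nonneg] integral_nonneg_AE[OF nonneg]
  show ?thesis unfolding set_lebesgue_integral_def by simp
qed

lemma tail_integral_split:
  fixes h :: "real \<Rightarrow> real"
  assumes "integrable lborel h" "a \<le> b"
  shows "tail_integral h a = (LINT g:{a<..b}|lborel. h g) + tail_integral h b"
proof -
  have "{a<..} = {a<..b} \<union> {b<..}" using assms(2) by auto
  moreover have "(LINT g:{a<..b} \<union> {b<..}|lborel. h g)
      = (LINT g:{a<..b}|lborel. h g) + (LINT g:{b<..}|lborel. h g)"
    by (rule set_integral_Un) (auto intro: set_integrable_lborel[OF assms(1)])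
  ultimately show ?thesis
    unfolding tail_integral_def by simp
qed

lemma tail_integral_nonneg:
  fixes h :: "real \<Rightarrow> real"
  assumes "\<And>g. h g \<ge> 0"
  shows "tail_integral h a \<ge> 0"
  unfolding tail_integral_def set_lebesgue_integral_def
  using assms by (intro integral_nonneg_AE) (auto intro!: AE_I2)

lemma tail_integral_strict_antimono:
  fixes h :: "real \<Rightarrow> real"
  assumes "integrable lborel h" "\<And>g. h g > 0" "a < b"
  shows "tail_integral h b < tail_integral h a"
  using tail_integral_split[OF assms(1) less_imp_le[OF assms(3)]] set_integral_Ioc_pos[OF assms]
  by simp

lemma tail_integral_pos:
  fixes h :: "real \<Rightarrow> real"
  assumes "integrable lborel h" "\<And>g. h g > 0"
  shows "tail_integral h a > 0"
  using tail_integral_strict_antimono[OF assms, of a "a + 1"] tail_integral_nonneg[of h "a + 1"] assms(2)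
  by (simp add: less_imp_le)

lemma tail_integral_le_integral:
  fixes h :: "real \<Rightarrow> real"
  assumes "integrable lborel h" "\<And>g. h g \<ge> 0"
  shows "tail_integral h a \<le> (\<integral>g. h g \<partial>lborel)"
  unfolding tail_integral_def set_lebesgue_integral_def
  using assms set_integrable_lborel[OF assms(1), of "{a<..}"]
  by (intro integral_mono) (auto simp: set_integrable_def split: split_indicator)

lemma tail_integral_tendsto_sequentially:
  fixes h :: "real \<Rightarrow> real"
  assumes "integrable lborel h" "S \<in> sets borel"
    and "AE g in lborel. eventually (\<lambda>n. X n < g \<longleftrightarrow> g \<in> S) sequentially"
  shows "(\<lambda>n. tail_integral h (X n)) \<longlonglongrightarrow> (LINT g:S|lborel. h g)"
  unfolding tail_integral_def set_lebesgue_integral_def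
proof (rule integral_dominated_convergence[where w="\<lambda>g. norm (h g)"])
  show "integrable lborel (\<lambda>g. norm (h g))" using assms(1) by simp
  show "(\<lambda>g. indicator S g *\<^sub>R h g) \<in> borel_measurable lborel"
    using set_integrable_lborel[OF assms(1,2)] by (simp add: set_integrable_def)
  show "(\<lambda>g. indicator {X n<..} g *\<^sub>R h g) \<in> borel_measurable lborel" for n
    using set_integrable_lborel[OF assms(1), of "{X n<..}"] by (simp add: set_integrable_def)
  show "AE g in lborel. (\<lambda>n. indicator {X n<..} g *\<^sub>R h g) \<longlonglongrightarrow> indicator S g *\<^sub>R h g"
    using assms(3)
  proof eventually_elim
    case (elim g)
    then have "eventually (\<lambda>n. indicator {X n<..} g *\<^sub>R h g = indicator S g *\<^sub>R h g) sequentially"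
      by eventually_elim (simp split: split_indicator)
    then show ?case by (rule tendsto_eventually)
  qed
  show "AE g in lborel. norm (indicator {X n<..} g *\<^sub>R h g) \<le> norm (h g)" for n
    by (auto intro!: AE_I2 split: split_indicator)
qed

lemma isCont_tail_integral:
  fixes h :: "real \<Rightarrow> real"
  assumes "integrable lborel h"
  shows "isCont (tail_integral h) a"
  unfolding isCont_def tendsto_at_iff_sequentially o_def
proof (intro allI impI)
  fix X :: "nat \<Rightarrow> real"
  assume "\<forall>n. X n \<in> UNIV - {a}" and X: "X \<longlonglongrightarrow> a"
  have "AE g in lborel. eventually (\<lambda>n. X n < g \<longleftrightarrow> g \<in> {a<..}) sequentially"
    using AE_lborel_singleton[of a]
  proof eventually_elim
    case (elim g)
    show ?case
    proof (cases "g < a")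
      case True
      from order_tendstoD(1)[OF X True] show ?thesis
        by eventually_elim (use True in auto)
    next
      case False
      with elim have "a < g" by simp
      from order_tendstoD(2)[OF X this] show ?thesis
        by eventually_elim (use \<open>a < g\<close> in auto)
    qed
  qed
  from tail_integral_tendsto_sequentially[OF assms _ this]
  show "(\<lambda>n. tail_integral h (X n)) \<longlonglongrightarrow> tail_integral h a"
    unfolding tail_integral_def by simp
qed

lemma tail_integral_tendsto_at_top:
  fixes h :: "real \<Rightarrow> real"
  assumes "integrable lborel h"
  shows "(tail_integral h \<longlongrightarrow> 0) at_top"
proof (rule tendsto_at_topI_sequentially)
  fix X :: "nat \<Rightarrow> real"
  assume X: "filterlim X at_top sequentially"
  have "AE g in lborel. eventually (\<lambda>n. X n < g \<longleftrightarrow> g \<in> {}) sequentially"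
  proof (intro AE_I2)
    fix g
    show "eventually (\<lambda>n. X n < g \<longleftrightarrow> g \<in> {}) sequentially"
      using X unfolding filterlim_at_top by (auto elim!: allE[of _ g] eventually_mono)
  qed
  from tail_integral_tendsto_sequentially[OF assms _ this]
  show "(\<lambda>n. tail_integral h (X n)) \<longlonglongrightarrow> 0" by (simp add: set_lebesgue_integral_def)
qed

lemma tail_integral_tendsto_at_bot:
  fixes h :: "real \<Rightarrow> real"
  assumes "integrable lborel h"
  shows "(tail_integral h \<longlongrightarrow> (\<integral>g. h g \<partial>lborel)) at_bot"
proof (rule tendsto_at_botI_sequentially)
  fix X :: "nat \<Rightarrow> real"
  assume X: "filterlim X at_bot sequentially"
  have "AE g in lborel. eventually (\<lambda>n. X n < g \<longleftrightarrow> g \<in> UNIV) sequentially"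
  proof (intro AE_I2)
    fix g
    show "eventually (\<lambda>n. X n < g \<longleftrightarrow> g \<in> UNIV) sequentially"
      using X unfolding filterlim_at_bot by (auto elim!: allE[of _ "g - 1"] eventually_mono)
  qed
  from tail_integral_tendsto_sequentially[OF assms _ this]
  show "(\<lambda>n. tail_integral h (X n)) \<longlonglongrightarrow> (\<integral>g. h g \<partial>lborel)"
    by (simp add: set_lebesgue_integral_def)
qed

text \<open>The monotone likelihood ratio transfers to tails: \<open>a \<mapsto> tail hq a / tail hu a\<close> is
  nondecreasing. Both comparisons below bound \<open>L\<close> by its value at the cut-off \<open>b\<close>.\<close>
lemma tail_integral_ratio_mono:
  fixes hq hu L :: "real \<Rightarrow> real"
  assumes int: "integrable lborel hq" "integrable lborel hu"
    and hu_pos: "\<And>g. hu g > 0" and hq_eq: "\<And>g. hq g = L g * hu g" and "mono L" and "a < b"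
  shows "tail_integral hq a * tail_integral hu b \<le> tail_integral hq b * tail_integral hu a"
proof -
  define Iq where "Iq = (LINT g:{a<..b}|lborel. hq g)"
  define Iu where "Iu = (LINT g:{a<..b}|lborel. hu g)"
  have Iq_le: "Iq \<le> L b * Iu"
  proof -
    have "Iq \<le> (LINT g:{a<..b}|lborel. L b * hu g)"
      unfolding Iq_def
    proof (rule set_integral_mono)
      fix g assume "g \<in> {a<..b}"
      then have "L g \<le> L b" using monoD[OF \<open>mono L\<close>] by simp
      then show "hq g \<le> L b * hu g"
        unfolding hq_eq using hu_pos[of g] by (simp add: mult_right_mono)
    qed (auto intro!: set_integrable_mult_right set_integrable_lborel int)
    then show ?thesis unfolding Iu_def by simp
  qed
  have tail_ge: "L b * tail_integral hu b \<le> tail_integral hq b"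
  proof -
    have "(LINT g:{b<..}|lborel. L b * hu g) \<le> tail_integral hq b"
      unfolding tail_integral_def
    proof (rule set_integral_mono)
      fix g assume "g \<in> {b<..}"
      then have "L b \<le> L g" using monoD[OF \<open>mono L\<close>] by simp
      then show "L b * hu g \<le> hq g"
        unfolding hq_eq using hu_pos[of g] by (simp add: mult_right_mono)
    qed (auto intro!: set_integrable_mult_right set_integrable_lborel int)
    then show ?thesis unfolding tail_integral_def by simp
  qed
  have Iu_pos: "Iu > 0" unfolding Iu_def using set_integral_Ioc_pos[OF int(2) hu_pos \<open>a < b\<close>] .
  have tail_u: "tail_integral hu b \<ge> 0" using tail_integral_nonneg[of hu] hu_pos less_imp_le by blast
  have "tail_integral hq a * tail_integral hu b = (Iq + tail_integral hq b) * tail_integral hu b"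
    unfolding Iq_def using tail_integral_split[OF int(1)] \<open>a < b\<close> by simp
  also have "\<dots> \<le> (L b * Iu + tail_integral hq b) * tail_integral hu b"
    using Iq_le tail_u by (intro mult_right_mono) auto
  also have "\<dots> = Iu * (L b * tail_integral hu b) + tail_integral hq b * tail_integral hu b"
    by (simp add: algebra_simps)
  also have "\<dots> \<le> Iu * tail_integral hq b + tail_integral hq b * tail_integral hu b"
    using tail_ge Iu_pos by (simp add: mult_left_mono)
  also have "\<dots> = tail_integral hq b * tail_integral hu a"
    unfolding Iu_def tail_integral_split[OF int(2) less_imp_le[OF \<open>a < b\<close>]]
    by (simp add: algebra_simps)
  finally show ?thesis .
qed

locale mlr_section =
  fixes pr :: real and hq hu L :: "real \<Rightarrow> real"
  assumes pr: "0 < pr" "pr < 1"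
    and hq_pos: "\<And>g. hq g > 0" and hu_pos: "\<And>g. hu g > 0"
    and hq_int: "integrable lborel hq" and hu_int: "integrable lborel hu"
    and hq_eq: "\<And>g. hq g = L g * hu g"
    and L_mono: "mono L"
begin

definition accept_mass :: "real \<Rightarrow> real" where
  "accept_mass a = pr * tail_integral hq a + (1 - pr) * tail_integral hu a"

definition total_mass :: real where
  "total_mass = pr * (\<integral>g. hq g \<partial>lborel) + (1 - pr) * (\<integral>g. hu g \<partial>lborel)"

text \<open>For the acceptance region \<open>{a<..}\<close> the two terms are \<open>s1\<close> and \<open>s2\<close>; the common factor
  \<open>1 / total_mass\<close> (the density of \<open>\<Theta>\<close>) cancels in \<open>s1\<close>.\<close>
definition gap :: "real \<Rightarrow> real" where
  "gap a = pr * tail_integral hq a / accept_mass a - accept_mass a / total_mass"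

lemma accept_mass_pos: "accept_mass a > 0"
  unfolding accept_mass_def
  using tail_integral_pos[OF hq_int hq_pos] tail_integral_pos[OF hu_int hu_pos] pr
  by (simp add: add_pos_pos)

lemma accept_mass_strict_antimono: "a < b \<Longrightarrow> accept_mass b < accept_mass a"
  unfolding accept_mass_def
  using tail_integral_strict_antimono[OF hq_int hq_pos] tail_integral_strict_antimono[OF hu_int hu_pos] pr
  by (intro add_strict_mono mult_strict_left_mono) auto

lemma accept_mass_le_total_mass: "accept_mass a \<le> total_mass"
  unfolding accept_mass_def total_mass_def
  using tail_integral_le_integral[OF hq_int] tail_integral_le_integral[OF hu_int] hq_pos hu_pos pr
  by (intro add_mono mult_left_mono) (auto simp: less_imp_le)

lemma total_mass_pos: "total_mass > 0"
  using accept_mass_le_total_mass[of 0] accept_mass_pos[of 0] by simp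

lemma accepted_share_mono:
  assumes "a < b"
  shows "pr * tail_integral hq a / accept_mass a \<le> pr * tail_integral hq b / accept_mass b"
proof -
  have "pr * tail_integral hq a * accept_mass b - pr * tail_integral hq b * accept_mass a
      = pr * (1 - pr) * (tail_integral hq a * tail_integral hu b - tail_integral hq b * tail_integral hu a)"
    unfolding accept_mass_def by (simp add: algebra_simps)
  also have "\<dots> \<le> 0"
    using tail_integral_ratio_mono[OF hq_int hu_int hu_pos hq_eq L_mono assms] pr
    by (intro mult_nonneg_nonpos) auto
  finally show ?thesis
    using accept_mass_pos[of a] accept_mass_pos[of b] by (simp add: divide_simps)
qed

lemma strict_mono_gap: "strict_mono gap"
proof (rule strict_monoI)
  fix a b :: real assume "a < b"
  then have "accept_mass b / total_mass < accept_mass a / total_mass"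
    using accept_mass_strict_antimono total_mass_pos by (simp add: divide_strict_right_mono)
  with accepted_share_mono[OF \<open>a < b\<close>] show "gap a < gap b"
    unfolding gap_def by simp
qed

lemma isCont_gap: "isCont gap a"
  using isCont_tail_integral[OF hq_int] isCont_tail_integral[OF hu_int]
    accept_mass_pos[of a] total_mass_pos
  unfolding gap_def accept_mass_def[abs_def] by (intro continuous_intros) auto

lemma gap_eventually_neg: "eventually (\<lambda>a. gap a < 0) at_bot"
proof -
  define q where "q = (\<integral>g. hq g \<partial>lborel)"
  define u where "u = (\<integral>g. hu g \<partial>lborel)"
  have total: "total_mass = pr * q + (1 - pr) * u"
    unfolding total_mass_def q_def u_def ..
  have "(accept_mass \<longlongrightarrow> pr * q + (1 - pr) * u) at_bot"
    unfolding accept_mass_def[abs_def] q_def u_def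
    by (intro tendsto_intros tail_integral_tendsto_at_bot hq_int hu_int)
  then have "(accept_mass \<longlongrightarrow> total_mass) at_bot" unfolding total .
  then have "(gap \<longlongrightarrow> pr * q / total_mass - total_mass / total_mass) at_bot"
    unfolding gap_def[abs_def] q_def
    using total_mass_pos
    by (intro tendsto_intros tail_integral_tendsto_at_bot hq_int) auto
  moreover have "pr * q / total_mass - total_mass / total_mass < 0"
  proof -
    have "u > 0"
      using tail_integral_le_integral[OF hu_int, of 0] tail_integral_pos[OF hu_int hu_pos, of 0] hu_pos
      unfolding u_def by (meson less_imp_le less_le_trans)
    then have "pr * q < total_mass" unfolding total using pr by simp
    then show ?thesis using total_mass_pos by (simp add: divide_strict_right_mono)
  qed
  ultimately show ?thesis by (rule order_tendstoD(2))
qed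

lemma gap_eventually_pos: "eventually (\<lambda>a. gap a > 0) at_top"
proof -
  define \<kappa> where "\<kappa> = pr * tail_integral hq 0 / accept_mass 0"
  have "\<kappa> > 0"
    unfolding \<kappa>_def using pr tail_integral_pos[OF hq_int hq_pos] accept_mass_pos by simp
  have "(accept_mass \<longlongrightarrow> pr * 0 + (1 - pr) * 0) at_top"
    unfolding accept_mass_def[abs_def]
    by (intro tendsto_intros tail_integral_tendsto_at_top hq_int hu_int)
  then have "((\<lambda>a. accept_mass a / total_mass) \<longlongrightarrow> 0 / total_mass) at_top"
    using total_mass_pos by (intro tendsto_intros) simp_all
  then have "eventually (\<lambda>a. accept_mass a / total_mass < \<kappa>) at_top"
    using \<open>\<kappa> > 0\<close> by (intro order_tendstoD(2)) simp_all
  with eventually_gt_at_top[of 0] show ?thesis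
  proof eventually_elim
    case (elim a)
    then show ?case
      using accepted_share_mono[of 0 a] unfolding gap_def \<kappa>_def by simp
  qed
qed

lemma gap_has_zero: "\<exists>a. gap a = 0"
proof -
  obtain a1 where "gap a1 < 0" using eventually_happens'[OF _ gap_eventually_neg] by auto
  moreover obtain a2 where "gap a2 > 0" using eventually_happens'[OF _ gap_eventually_pos] by auto
  ultimately show ?thesis
    using isCont_gap
    by (intro continuous_attains_intermediate[of gap a1 0 a2])
      (auto intro: continuous_at_imp_continuous_on less_imp_le)
qed

end

lemma threshold_pos:
  assumes "0 < pr" "pr < 1" "\<tau> \<in> {-xu<..<xq}"
  shows "threshold pr xq xu \<tau> > 0"
  using assms unfolding threshold_def by (auto intro!: divide_pos_pos mult_pos_pos)

lemma threshold_strict_mono_on: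
  assumes "0 < pr" "pr < 1"
  shows "strict_mono_on {-xu<..<xq} (threshold pr xq xu)"
proof (rule strict_mono_onI)
  fix \<tau>1 \<tau>2 assume "\<tau>1 \<in> {-xu<..<xq}" "\<tau>2 \<in> {-xu<..<xq}" "\<tau>1 < \<tau>2"
  with assms show "threshold pr xq xu \<tau>1 < threshold pr xq xu \<tau>2"
    unfolding threshold_def by (intro frac_less) (auto intro: mult_left_mono)
qed

lemma threshold_surj:
  assumes "0 < pr" "pr < 1" "xq > 0" "xu > 0" "y > 0"
  shows "\<exists>\<tau>\<in>{-xu<..<xq}. threshold pr xq xu \<tau> = y"
proof
  define d where "d = (1 - pr) + pr * y"
  define \<tau> where "\<tau> = (pr * xq * y - (1 - pr) * xu) / d"
  have "d > 0" unfolding d_def using assms by (simp add: add_pos_nonneg)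
  have lower: "xu + \<tau> = pr * y * (xu + xq) / d" and upper: "xq - \<tau> = (1 - pr) * (xu + xq) / d"
    unfolding \<tau>_def d_def using \<open>d > 0\<close> by (simp_all add: d_def field_simps)
  have "xu + \<tau> > 0" "xq - \<tau> > 0"
    unfolding lower upper using assms \<open>d > 0\<close> by simp_all
  then show "\<tau> \<in> {-xu<..<xq}" by simp
  have "(1 - pr) * (xu + \<tau>) = y * (pr * (xq - \<tau>))"
    unfolding lower upper by (simp add: algebra_simps)
  then show "threshold pr xq xu \<tau> = y"
    unfolding threshold_def using assms(1) \<open>xq - \<tau> > 0\<close> by simp
qed

lemma accept_set_eq_greaterThan:
  assumes "strict_mono (lik_ratio hq hu \<theta>)" "lik_ratio hq hu \<theta> a = threshold pr xq xu \<tau>"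
  shows "accept_set pr xq xu hq hu \<theta> \<tau> = {a<..}"
  unfolding accept_set_def assms(2)[symmetric] using strict_mono_less[OF assms(1)] by auto

lemma s1_minus_s2_eq_gap:
  assumes "mlr_section pr (hq \<theta>) (hu \<theta>) L" "accept_set pr xq xu hq hu \<theta> \<tau> = {a<..}"
  shows "s1 pr xq xu hq hu \<theta> \<tau> - s2 pr xq xu hq hu \<theta> \<tau> = mlr_section.gap pr (hq \<theta>) (hu \<theta>) a"
proof -
  interpret mlr_section pr "hq \<theta>" "hu \<theta>" L by (fact assms(1))
  have density: "theta_density pr hq hu \<theta> = total_mass"
    unfolding theta_density_def total_mass_def ..
  have "prob_QA_given pr xq xu hq hu \<theta> \<tau> = pr * tail_integral (hq \<theta>) a / total_mass"
    unfolding prob_QA_given_def assms(2) density tail_integral_def ..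
  moreover have "prob_A_given pr xq xu hq hu \<theta> \<tau> = accept_mass a / total_mass"
    unfolding prob_A_given_def assms(2) density accept_mass_def tail_integral_def ..
  ultimately show ?thesis
    unfolding s1_def s2_def gap_def using total_mass_pos accept_mass_pos[of a] by simp
qed

lemma s1_minus_s2_crosses_zero:
  fixes hq hu :: "real \<Rightarrow> real \<Rightarrow> real"
  assumes pr: "0 < pr" "pr < 1" and payoffs: "xq > 0" "xu > 0"
    and mlr: "mlr_section pr (hq \<theta>) (hu \<theta>) (lik_ratio hq hu \<theta>)"
    and L_strict: "strict_mono (lik_ratio hq hu \<theta>)"
    and L_onto: "\<And>c. c > 0 \<Longrightarrow> \<exists>g. lik_ratio hq hu \<theta> g = c"
  shows "strict_mono_on {-xu<..<xq} (\<lambda>\<tau>. s1 pr xq xu hq hu \<theta> \<tau> - s2 pr xq xu hq hu \<theta> \<tau>)"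
    and "\<exists>\<tau>\<in>{-xu<..<xq}. s1 pr xq xu hq hu \<theta> \<tau> - s2 pr xq xu hq hu \<theta> \<tau> = 0"
proof -
  interpret mlr_section pr "hq \<theta>" "hu \<theta>" "lik_ratio hq hu \<theta>" by (fact mlr)
  have cutoff: "\<exists>a. lik_ratio hq hu \<theta> a = threshold pr xq xu \<tau>
      \<and> s1 pr xq xu hq hu \<theta> \<tau> - s2 pr xq xu hq hu \<theta> \<tau> = gap a"
    if \<tau>: "\<tau> \<in> {-xu<..<xq}" for \<tau>
  proof -
    obtain a where a: "lik_ratio hq hu \<theta> a = threshold pr xq xu \<tau>"
      using L_onto[OF threshold_pos[OF pr \<tau>]] by blast
    then show ?thesis
      using s1_minus_s2_eq_gap[OF mlr accept_set_eq_greaterThan[OF L_strict a]] by blast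
  qed
  show "strict_mono_on {-xu<..<xq} (\<lambda>\<tau>. s1 pr xq xu hq hu \<theta> \<tau> - s2 pr xq xu hq hu \<theta> \<tau>)"
  proof (rule strict_mono_onI)
    fix \<tau>1 \<tau>2 assume \<tau>: "\<tau>1 \<in> {-xu<..<xq}" "\<tau>2 \<in> {-xu<..<xq}" "\<tau>1 < \<tau>2"
    obtain a1 a2 where a1: "lik_ratio hq hu \<theta> a1 = threshold pr xq xu \<tau>1"
      "s1 pr xq xu hq hu \<theta> \<tau>1 - s2 pr xq xu hq hu \<theta> \<tau>1 = gap a1"
      and a2: "lik_ratio hq hu \<theta> a2 = threshold pr xq xu \<tau>2"
      "s1 pr xq xu hq hu \<theta> \<tau>2 - s2 pr xq xu hq hu \<theta> \<tau>2 = gap a2"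
      using cutoff[OF \<tau>(1)] cutoff[OF \<tau>(2)] by blast
    have "a1 < a2"
      using strict_mono_onD[OF threshold_strict_mono_on[OF pr] \<tau>]
      unfolding a1(1)[symmetric] a2(1)[symmetric] strict_mono_less[OF L_strict] .
    then show "s1 pr xq xu hq hu \<theta> \<tau>1 - s2 pr xq xu hq hu \<theta> \<tau>1
        < s1 pr xq xu hq hu \<theta> \<tau>2 - s2 pr xq xu hq hu \<theta> \<tau>2"
      unfolding a1(2) a2(2) by (rule strict_monoD[OF strict_mono_gap])
  qed
  obtain a0 where a0: "gap a0 = 0" using gap_has_zero by blast
  have "lik_ratio hq hu \<theta> a0 > 0"
    using hq_pos hu_pos unfolding lik_ratio_def by simp
  then obtain \<tau>0 where \<tau>0: "\<tau>0 \<in> {-xu<..<xq}" "threshold pr xq xu \<tau>0 = lik_ratio hq hu \<theta> a0"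
    using threshold_surj[OF pr payoffs] by blast
  obtain a where "lik_ratio hq hu \<theta> a = lik_ratio hq hu \<theta> a0"
    and F\<tau>0: "s1 pr xq xu hq hu \<theta> \<tau>0 - s2 pr xq xu hq hu \<theta> \<tau>0 = gap a"
    using cutoff[OF \<tau>0(1)] unfolding \<tau>0(2) by blast
  then have "a = a0" using strict_mono_eq[OF L_strict] by blast
  with F\<tau>0 a0 \<tau>0(1)
  show "\<exists>\<tau>\<in>{-xu<..<xq}. s1 pr xq xu hq hu \<theta> \<tau> - s2 pr xq xu hq hu \<theta> \<tau> = 0" by auto
qed

theorem mainTheorem5:
  fixes pr xq xu \<theta> tau :: real
    and hq hu :: "real \<Rightarrow> real \<Rightarrow> real"
  assumes pr: "0 < pr" "pr < 1"
    and payoffs: "xq > 0" "xu > 0"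
    and hq_pos: "\<And>t g. hq t g > 0"
    and hu_pos: "\<And>t g. hu t g > 0"
    and hq_meas: "(\<lambda>p. hq (fst p) (snd p)) \<in> borel_measurable (lborel :: (real \<times> real) measure)"
    and hu_meas: "(\<lambda>p. hu (fst p) (snd p)) \<in> borel_measurable (lborel :: (real \<times> real) measure)"
    and hq_int: "integrable (lborel :: (real \<times> real) measure) (\<lambda>p. hq (fst p) (snd p))"
    and hu_int: "integrable (lborel :: (real \<times> real) measure) (\<lambda>p. hu (fst p) (snd p))"
    and hq_one: "(\<integral>p. hq (fst p) (snd p) \<partial>(lborel :: (real \<times> real) measure)) = 1"
    and hu_one: "(\<integral>p. hu (fst p) (snd p) \<partial>(lborel :: (real \<times> real) measure)) = 1"
    and sec_q: "integrable lborel (\<lambda>g. hq \<theta> g)"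
    and sec_u: "integrable lborel (\<lambda>g. hu \<theta> g)"
    and l_cont: "continuous_on UNIV (\<lambda>p. lik_ratio hq hu (fst p) (snd p))"
    and l_mono_t: "\<And>g. strict_mono (\<lambda>t. lik_ratio hq hu t g)"
    and l_mono_g: "\<And>t. strict_mono (\<lambda>g. lik_ratio hq hu t g)"
    and l_inf: "\<And>t. (INF g. lik_ratio hq hu t g) = 0"
    and l_sup: "\<And>t. \<not> bdd_above (range (\<lambda>g. lik_ratio hq hu t g))"
    and tau: "tau \<in> {-xu<..<xq}"
  shows "(s1 pr xq xu hq hu \<theta> tau > s2 pr xq xu hq hu \<theta> tau
            \<longleftrightarrow> tau > tau_star pr xq xu hq hu \<theta>)
       \<and> (s1 pr xq xu hq hu \<theta> tau < s2 pr xq xu hq hu \<theta> tau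
            \<longleftrightarrow> tau < tau_star pr xq xu hq hu \<theta>)"
proof -
  let ?F = "\<lambda>\<tau>. s1 pr xq xu hq hu \<theta> \<tau> - s2 pr xq xu hq hu \<theta> \<tau>"
  have L_strict: "strict_mono (lik_ratio hq hu \<theta>)" using l_mono_g[of \<theta>] by simp
  have mlr: "mlr_section pr (hq \<theta>) (hu \<theta>) (lik_ratio hq hu \<theta>)"
    using pr hq_pos hu_pos sec_q sec_u strict_mono_mono[OF L_strict] less_imp_neq[OF hu_pos]
    by unfold_locales (auto simp: lik_ratio_def)
  have "continuous_on UNIV ((\<lambda>p. lik_ratio hq hu (fst p) (snd p)) \<circ> Pair \<theta>)"
    using l_cont by (intro continuous_on_compose continuous_intros) (auto elim: continuous_on_subset)
  then have L_onto: "\<exists>g. lik_ratio hq hu \<theta> g = c" if "c > 0" for c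
    using continuous_attains_above_Inf[of "lik_ratio hq hu \<theta>" c] l_inf[of \<theta>] l_sup[of \<theta>] that
    by (simp add: o_def)
  obtain \<tau>0 where \<tau>0: "\<tau>0 \<in> {-xu<..<xq}" "?F \<tau>0 = 0"
    using s1_minus_s2_crosses_zero(2)[OF pr payoffs mlr L_strict L_onto] by blast
  note F_strict = s1_minus_s2_crosses_zero(1)[OF pr payoffs mlr L_strict L_onto]
  have "tau_star pr xq xu hq hu \<theta> = \<tau>0"
    unfolding tau_star_def
  proof (rule the_equality)
    fix \<tau> assume "\<tau> \<in> {-xu<..<xq} \<and> s1 pr xq xu hq hu \<theta> \<tau> = s2 pr xq xu hq hu \<theta> \<tau>"
    then show "\<tau> = \<tau>0"
      using strict_mono_on_eqD[OF F_strict, of \<tau>0 \<tau>] \<tau>0 by simp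
  qed (use \<tau>0 in simp)
  then show ?thesis
    using strict_mono_on_sign_iff[OF F_strict \<tau>0 tau] by auto
qed

end
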